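(* Let $m\ge 1$ and let $s_1,\dots,s_{2m}$ be positive integers. Put $S=\sum_{i=1}^{2m}s_i$, $s_{\max}=\max_i s_i$, $M=S+1$, $d_i=s_{\max}-s_i$, and $\epsilon=\frac{1}{2M}$. Let $$P_R=\Big\{x\in\mathbb{R}^{2m}:\ 0\le x_i\le 1\ \forall i,\ \sum_{i=1}^{2m}(M+s_i)x_i\le \tfrac12 S+mM+\epsilon,\ \sum_{i=1}^{2m}(M+d_i)x_i\le \tfrac12\sum_{i=1}^{2m}d_i+mM+\epsilon\Big\}.$$ Suppose $\sum_{j=1}^{m}s_j=\frac S2$ (so that $\{s_1,\dots,s_m\}$ and $\{s_{m+1},\dots,s_{2m}\}$ form an exact partition). Let $v^*$ be a vertex of $P_R$ with exactly $2m-1$ coordinates in $\{0,1\}$, such that $\{j: v^*_j=1\}=\{1,\dots,m\}$ and whose unique fractional coordinate index $i$ (with $0<v^*_i<1$, necessarily $i\in\{m+1,\dots,2m\}$) satisfies $s_i=\frac{s_{\max}}{2}$. Then $v^*$ is degenerate: both knapsack inequalities are active at $v^*$ in addition to $2m-1$ box constraints, so $2m+1$ defining inequalities are active at $v^*$.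
   Context: The inequalities $0\le x_i\le1$ are the box constraints; the other two inequalities are the knapsack constraints. A vertex of $P_R$ is degenerate if more than $2m$ of the $4m+2$ defining inequalities are active at it. *)

theory Defs
  imports Main "HOL-Library.Function_Algebras" Complex_Main
begin

text \<open>Points of R^{2m} are represented as functions nat => real, coordinates indexed by
  1..2m; coordinates outside {1..2m} are required to be 0 (so that R^{2m} is embedded
  faithfully).\<close>

definition S_sum :: "nat \<Rightarrow> (nat \<Rightarrow> nat) \<Rightarrow> real" where
  "S_sum m s = (\<Sum>i=1..2*m. real (s i))"

definition s_max :: "nat \<Rightarrow> (nat \<Rightarrow> nat) \<Rightarrow> real" where
  "s_max m s = real (Max (s ` {1..2*m}))"

definition M_big :: "nat \<Rightarrow> (nat \<Rightarrow> nat) \<Rightarrow> real" where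
  "M_big m s = S_sum m s + 1"

definition dd :: "nat \<Rightarrow> (nat \<Rightarrow> nat) \<Rightarrow> nat \<Rightarrow> real" where
  "dd m s i = s_max m s - real (s i)"

definition eps :: "nat \<Rightarrow> (nat \<Rightarrow> nat) \<Rightarrow> real" where
  "eps m s = 1 / (2 * M_big m s)"

definition knap1 :: "nat \<Rightarrow> (nat \<Rightarrow> nat) \<Rightarrow> (nat \<Rightarrow> real) \<Rightarrow> real" where
  "knap1 m s x = (\<Sum>i=1..2*m. (M_big m s + real (s i)) * x i)"

definition rhs1 :: "nat \<Rightarrow> (nat \<Rightarrow> nat) \<Rightarrow> real" where
  "rhs1 m s = S_sum m s / 2 + real m * M_big m s + eps m s"

definition knap2 :: "nat \<Rightarrow> (nat \<Rightarrow> nat) \<Rightarrow> (nat \<Rightarrow> real) \<Rightarrow> real" where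
  "knap2 m s x = (\<Sum>i=1..2*m. (M_big m s + dd m s i) * x i)"

definition rhs2 :: "nat \<Rightarrow> (nat \<Rightarrow> nat) \<Rightarrow> real" where
  "rhs2 m s = (\<Sum>i=1..2*m. dd m s i) / 2 + real m * M_big m s + eps m s"

definition P_R :: "nat \<Rightarrow> (nat \<Rightarrow> nat) \<Rightarrow> (nat \<Rightarrow> real) set" where
  "P_R m s = {x. (\<forall>i. i \<notin> {1..2*m} \<longrightarrow> x i = 0)
              \<and> (\<forall>i\<in>{1..2*m}. 0 \<le> x i \<and> x i \<le> 1)
              \<and> knap1 m s x \<le> rhs1 m s
              \<and> knap2 m s x \<le> rhs2 m s}"

definition is_vertex :: "(nat \<Rightarrow> real) set \<Rightarrow> (nat \<Rightarrow> real) \<Rightarrow> bool" where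
  "is_vertex P v \<longleftrightarrow> v \<in> P \<and>
     (\<forall>a\<in>P. \<forall>b\<in>P. \<forall>t::real. 0 < t \<and> t < 1 \<and> v = (\<lambda>j. t * a j + (1 - t) * b j) \<longrightarrow> a = b)"

definition active_box :: "nat \<Rightarrow> (nat \<Rightarrow> real) \<Rightarrow> nat" where
  "active_box m x = card {i\<in>{1..2*m}. x i = 0} + card {i\<in>{1..2*m}. x i = 1}"

definition active_count :: "nat \<Rightarrow> (nat \<Rightarrow> nat) \<Rightarrow> (nat \<Rightarrow> real) \<Rightarrow> nat" where
  "active_count m s x = active_box m x
     + (if knap1 m s x = rhs1 m s then 1 else 0)
     + (if knap2 m s x = rhs2 m s then 1 else 0)"

definition degenerate :: "nat \<Rightarrow> (nat \<Rightarrow> nat) \<Rightarrow> (nat \<Rightarrow> real) \<Rightarrow> bool" where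
  "degenerate m s v \<longleftrightarrow> is_vertex (P_R m s) v \<and> active_count m s v > 2 * m"

end

theory Submission
  imports Defs
begin

text \<open>At \<open>v\<close> every coordinate other than \<open>v i\<close> is fixed by the exact partition, and
  \<open>s i = s_max / 2\<close> gives \<open>x i\<close> the same coefficient \<open>M + s i = M + d i\<close> in both knapsack
  constraints; together with \<open>s 1 + ... + s m = S / 2\<close> this makes the two knapsack slacks equal at
  \<open>v\<close>. If both slacks were positive, \<open>v\<close> could be moved a little in both directions along the
  \<open>i\<close>-th coordinate axis without leaving \<open>P_R\<close>, so \<open>v\<close> would not be a vertex. Hence both
  knapsack constraints are tight.\<close>

lemma sum_mult_fun_upd:
  fixes f x :: "'a \<Rightarrow> 'b::comm_ring"
  assumes "finite A" "i \<in> A"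
  shows "(\<Sum>j\<in>A. f j * (x(i := y)) j) = (\<Sum>j\<in>A. f j * x j) + f i * (y - x i)"
proof -
  have "(\<Sum>j\<in>A. f j * (x(i := y)) j) = f i * y + (\<Sum>j\<in>A - {i}. f j * x j)"
    using assms by (simp add: sum.remove)
  also have "(\<Sum>j\<in>A - {i}. f j * x j) = (\<Sum>j\<in>A. f j * x j) - f i * x i"
    using assms by (simp add: sum_diff1)
  finally show ?thesis by (simp add: algebra_simps)
qed

lemma is_vertex_coordinate_perturbation:
  assumes "is_vertex P v" "v(i := v i + e) \<in> P" "v(i := v i - e) \<in> P"
  shows "e = 0"
proof -
  have "0 < (1/2::real) \<and> (1/2::real) < 1
      \<and> v = (\<lambda>j. 1/2 * (v(i := v i + e)) j + (1 - 1/2) * (v(i := v i - e)) j)"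
    by (auto simp: fun_eq_iff field_simps)
  then have "v(i := v i + e) = v(i := v i - e)"
    using assms unfolding is_vertex_def by blast
  then have "v i + e = v i - e"
    by (metis fun_upd_same)
  then show ?thesis by simp
qed

lemma knap1_fun_upd:
  "i \<in> {1..2*m} \<Longrightarrow>
    knap1 m s (x(i := y)) = knap1 m s x + (M_big m s + real (s i)) * (y - x i)"
  unfolding knap1_def by (rule sum_mult_fun_upd[where f = "\<lambda>j. M_big m s + real (s j)"]) auto

lemma knap2_fun_upd:
  "i \<in> {1..2*m} \<Longrightarrow>
    knap2 m s (x(i := y)) = knap2 m s x + (M_big m s + dd m s i) * (y - x i)"
  unfolding knap2_def by (rule sum_mult_fun_upd[where f = "\<lambda>j. M_big m s + dd m s j"]) auto

lemma P_R_fun_upd: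
  assumes "x \<in> P_R m s" "i \<in> {1..2*m}" "0 \<le> y" "y \<le> 1"
    and "knap1 m s (x(i := y)) \<le> rhs1 m s" "knap2 m s (x(i := y)) \<le> rhs2 m s"
  shows "x(i := y) \<in> P_R m s"
  using assms unfolding P_R_def by auto

lemma is_vertex_P_R_fractional_coordinate:
  assumes vertex: "is_vertex (P_R m s) v"
    and i: "i \<in> {1..2*m}" "0 < v i" "v i < 1"
  shows "knap1 m s v = rhs1 m s \<or> knap2 m s v = rhs2 m s"
proof (rule ccontr)
  define c1 where "c1 = M_big m s + real (s i)"
  define c2 where "c2 = M_big m s + dd m s i"
  define slack1 where "slack1 = rhs1 m s - knap1 m s v"
  define slack2 where "slack2 = rhs2 m s - knap2 m s v"
  define e where "e = min (min (v i) (1 - v i)) (min (slack1 / (\<bar>c1\<bar> + 1)) (slack2 / (\<bar>c2\<bar> + 1)))"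
  have vP: "v \<in> P_R m s"
    using vertex unfolding is_vertex_def by blast
  assume "\<not> (knap1 m s v = rhs1 m s \<or> knap2 m s v = rhs2 m s)"
  with vP have "slack1 > 0" "slack2 > 0"
    unfolding P_R_def slack1_def slack2_def by auto
  then have "e > 0"
    using i unfolding e_def by simp
  have slack_bound: "c * r < slack" if "\<bar>r\<bar> \<le> e" "e \<le> slack / (\<bar>c\<bar> + 1)" "slack > 0"
    for c r slack :: real
  proof -
    have "c * r \<le> \<bar>c\<bar> * e"
      using that(1) by (metis abs_ge_self abs_mult dual_order.trans abs_ge_zero mult_left_mono)
    also have "\<dots> < (\<bar>c\<bar> + 1) * e"
      using \<open>e > 0\<close> by (simp add: distrib_right)
    also have "\<dots> \<le> slack"
      using that(2) by (simp add: pos_le_divide_eq mult.commute)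
    finally show ?thesis .
  qed
  have "v(i := v i + r) \<in> P_R m s" if "\<bar>r\<bar> \<le> e" for r
  proof (rule P_R_fun_upd[OF vP i(1)])
    show "0 \<le> v i + r" "v i + r \<le> 1"
      using that unfolding e_def by auto
    have "e \<le> slack1 / (\<bar>c1\<bar> + 1)" "e \<le> slack2 / (\<bar>c2\<bar> + 1)"
      unfolding e_def by simp_all
    then have "c1 * r < slack1" "c2 * r < slack2"
      using slack_bound that \<open>slack1 > 0\<close> \<open>slack2 > 0\<close> by blast+
    then show "knap1 m s (v(i := v i + r)) \<le> rhs1 m s" "knap2 m s (v(i := v i + r)) \<le> rhs2 m s"
      unfolding knap1_fun_upd[OF i(1)] knap2_fun_upd[OF i(1)] c1_def c2_def slack1_def slack2_def
      by simp_all
  qed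
  from this[of e] this[of "-e"] have "e = 0"
    using is_vertex_coordinate_perturbation[OF vertex, of i e] \<open>e > 0\<close> by simp
  with \<open>e > 0\<close> show False by simp
qed

lemma card_integral_coordinates_all_but_one:
  assumes "finite A" "i \<in> A" "x i \<notin> {0, 1}"
    and "card {j\<in>A. x j \<in> {0, 1}} = card A - 1"
  shows "\<forall>j\<in>A - {i}. x j \<in> {0, 1}"
proof -
  have "{j\<in>A. x j \<in> {0, 1}} \<subseteq> A - {i}"
    using assms(3) by auto
  moreover have "card (A - {i}) = card A - 1"
    using assms(2) by simp
  ultimately have "{j\<in>A. x j \<in> {0, 1}} = A - {i}"
    using assms(1,4) by (metis card_subset_eq finite_Diff)
  then show ?thesis by blast
qed

lemma sum_mult_partition_point:
  fixes x f :: "nat \<Rightarrow> real"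
  assumes ones: "{j\<in>{1..2*m}. x j = 1} = {1..m}"
    and i: "i \<in> {1..2*m}" "x i \<noteq> 1"
    and integral: "\<forall>j\<in>{1..2*m} - {i}. x j \<in> {0, 1}"
  shows "(\<Sum>j=1..2*m. f j * x j) = (\<Sum>j=1..m. f j) + f i * x i"
proof -
  have "i \<notin> {1..m}"
    using i unfolding ones[symmetric] by simp
  then have "m < i"
    using i(1) by simp
  have "(\<Sum>j=1..2*m. f j * x j)
      = (\<Sum>j=1..2*m. (if j \<le> m then f j else 0) + (if j = i then f i * x i else 0))"
  proof (rule sum.cong)
    fix j assume j: "j \<in> {1..2*m}"
    then have "x j = 1 \<longleftrightarrow> j \<le> m"
      using eqset_imp_iff[OF ones, of j] by auto
    moreover have "j \<noteq> i \<Longrightarrow> x j \<in> {0, 1}"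
      using integral j by simp
    ultimately show "f j * x j = (if j \<le> m then f j else 0) + (if j = i then f i * x i else 0)"
      using \<open>m < i\<close> by auto
  qed simp
  also have "\<dots> = (\<Sum>j=1..m. f j) + f i * x i"
  proof -
    have "{1..2*m} \<inter> {j. j \<le> m} = {1..m}"
      by auto
    then show ?thesis
      using i(1) by (simp add: sum.distrib sum.If_cases)
  qed
  finally show ?thesis .
qed

lemma knap2_minus_knap1_partition_point:
  assumes half: "(\<Sum>j=1..m. real (s j)) = S_sum m s / 2"
    and s_i: "real (s i) = s_max m s / 2"
    and ones: "{j\<in>{1..2*m}. x j = 1} = {1..m}"
    and i: "i \<in> {1..2*m}" "x i \<noteq> 1"
    and integral: "\<forall>j\<in>{1..2*m} - {i}. x j \<in> {0, 1}"
  shows "knap2 m s x - knap1 m s x = rhs2 m s - rhs1 m s"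
proof -
  have "knap2 m s x - knap1 m s x = (\<Sum>j=1..2*m. (dd m s j - real (s j)) * x j)"
    unfolding knap1_def knap2_def sum_subtractf[symmetric] by (rule sum.cong) (simp_all add: algebra_simps)
  also have "\<dots> = (\<Sum>j=1..m. dd m s j - real (s j)) + (dd m s i - real (s i)) * x i"
    using sum_mult_partition_point[OF ones i integral] .
  also have "\<dots> = (\<Sum>j=1..m. dd m s j - real (s j))"
    using s_i unfolding dd_def by simp
  also have "\<dots> = real m * s_max m s - 2 * (\<Sum>j=1..m. real (s j))"
    unfolding dd_def by (simp add: sum_subtractf sum_distrib_left)
  also have "\<dots> = real m * s_max m s - S_sum m s"
    using half by simp
  also have "\<dots> = rhs2 m s - rhs1 m s"
    unfolding rhs1_def rhs2_def dd_def S_sum_def by (simp add: sum_subtractf field_simps)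
  finally show ?thesis .
qed

lemma active_box_eq_card_integral:
  "active_box m x = card {j\<in>{1..2*m}. x j \<in> {0, 1}}"
proof -
  have "{j\<in>{1..2*m}. x j \<in> {0, 1}} = {j\<in>{1..2*m}. x j = 0} \<union> {j\<in>{1..2*m}. x j = 1}"
    by auto
  then show ?thesis
    unfolding active_box_def by (simp add: card_Un_disjoint disjoint_iff)
qed

theorem theorem1:
  fixes m :: nat and s :: "nat \<Rightarrow> nat" and v :: "nat \<Rightarrow> real" and i :: nat
  assumes "m \<ge> 1"
    and "\<forall>j\<in>{1..2*m}. s j > 0"
    and "(\<Sum>j=1..m. real (s j)) = S_sum m s / 2"
    and "is_vertex (P_R m s) v"
    and "card {j\<in>{1..2*m}. v j \<in> {0, 1}} = 2 * m - 1"
    and "{j\<in>{1..2*m}. v j = 1} = {1..m}"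
    and "i \<in> {1..2*m}" and "0 < v i" and "v i < 1"
    and "real (s i) = s_max m s / 2"
  shows "knap1 m s v = rhs1 m s \<and> knap2 m s v = rhs2 m s
         \<and> active_box m v = 2 * m - 1 \<and> active_count m s v = 2 * m + 1
         \<and> degenerate m s v"
proof -
  have integral: "\<forall>j\<in>{1..2*m} - {i}. v j \<in> {0, 1}"
    using card_integral_coordinates_all_but_one[of "{1..2*m}" i v] assms(5,7-9) by simp
  have "knap2 m s v - knap1 m s v = rhs2 m s - rhs1 m s"
    using knap2_minus_knap1_partition_point[OF assms(3,10,6,7) _ integral] assms(9) by simp
  moreover have "knap1 m s v = rhs1 m s \<or> knap2 m s v = rhs2 m s"
    using is_vertex_P_R_fractional_coordinate[OF assms(4,7-9)] .
  ultimately have tight: "knap1 m s v = rhs1 m s" "knap2 m s v = rhs2 m s"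
    by auto
  moreover have box: "active_box m v = 2 * m - 1"
    using assms(5) by (simp add: active_box_eq_card_integral)
  moreover have "active_count m s v = 2 * m + 1"
    unfolding active_count_def using tight box assms(1) by simp
  ultimately show ?thesis
    using assms(1,4) unfolding degenerate_def by simp
qed

end
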